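(* After any non-terminal history at which the chair has not (at any earlier history along it) missed an opportunity or taken a risk, there is a pair of distinct alternatives unranked by the current proto-ranking which can be offered without missing an opportunity or taking a risk.
   Context: Let $\mathcal{X}$ be a finite set of alternatives. A proto-ranking is an irreflexive and transitive binary relation on $\mathcal{X}$; a ranking is a total proto-ranking; a tournament is a total and asymmetric relation on $\mathcal{X}$. The chair has a fixed preference $\succ$, a ranking on $\mathcal{X}$. Interaction: starting from $R_0=\varnothing$, in each period $t\geq1$ with $R_{t-1}$ not total the chair offers a pair $\{x,y\}$ unranked by $R_{t-1}$, one of them wins, and $R_t$ is the transitive closure of $R_{t-1}\cup\{(\text{winner},\text{loser})\}$. A history is a finite sequence of (winner, loser) pairs arising this way, with associated current proto-ranking; it is non-terminal if that proto-ranking is not total. Errors: let $R$ be a non-total proto-ranking and $x\succ y$ alternatives unranked by $R$. Offering $\{x,y\}$ misses an opportunity at $R$ if there is $z$ with $x\succ z\succ y$ and neither $yRz$ nor $zRx$. Offering $\{x,y\}$ takes a risk at $R$ if there is $z$ with either (a) $z\succ y$, $xRz$ and not $yRz$, or (b) $x\succ z$, $zRy$ and not $zRx$. The chair has missed an opportunity or taken a risk at a history if some pair offered along it did so at the proto-ranking in force when it was offered. *)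

theory Defs
  imports Main
begin

definition proto_ranking :: "'a set \<Rightarrow> 'a rel \<Rightarrow> bool" where
  "proto_ranking X R \<longleftrightarrow> R \<subseteq> X \<times> X \<and> irrefl R \<and> trans R"

definition ranking :: "'a set \<Rightarrow> 'a rel \<Rightarrow> bool" where
  "ranking X R \<longleftrightarrow> proto_ranking X R \<and> total_on X R"

definition unranked :: "'a rel \<Rightarrow> 'a \<Rightarrow> 'a \<Rightarrow> bool" where
  "unranked R x y \<longleftrightarrow> x \<noteq> y \<and> (x, y) \<notin> R \<and> (y, x) \<notin> R"

text \<open>Current proto-ranking after a history (list of (winner, loser) pairs, in order).\<close>
definition cur :: "('a \<times> 'a) list \<Rightarrow> 'a rel" where
  "cur h = foldl (\<lambda>R (w, l). trancl (R \<union> {(w, l)})) {} h"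

inductive history :: "'a set \<Rightarrow> ('a \<times> 'a) list \<Rightarrow> bool" for X where
  Nil: "history X []"
| step: "history X h \<Longrightarrow> \<not> total_on X (cur h) \<Longrightarrow> w \<in> X \<Longrightarrow> l \<in> X \<Longrightarrow>
     unranked (cur h) w l \<Longrightarrow> history X (h @ [(w, l)])"

text \<open>Offering {x,y} with x \<succ> y (P is the chair's preference).\<close>
definition misses_opp :: "'a rel \<Rightarrow> 'a rel \<Rightarrow> 'a \<Rightarrow> 'a \<Rightarrow> bool" where
  "misses_opp P R x y \<longleftrightarrow> (\<exists>z. (x, z) \<in> P \<and> (z, y) \<in> P \<and> (y, z) \<notin> R \<and> (z, x) \<notin> R)"

definition takes_risk :: "'a rel \<Rightarrow> 'a rel \<Rightarrow> 'a \<Rightarrow> 'a \<Rightarrow> bool" where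
  "takes_risk P R x y \<longleftrightarrow> (\<exists>z. ((z, y) \<in> P \<and> (x, z) \<in> R \<and> (y, z) \<notin> R)
                               \<or> ((x, z) \<in> P \<and> (z, y) \<in> R \<and> (z, x) \<notin> R))"

definition offer_error :: "'a rel \<Rightarrow> 'a rel \<Rightarrow> 'a \<Rightarrow> 'a \<Rightarrow> bool" where
  "offer_error P R a b \<longleftrightarrow>
     (if (a, b) \<in> P then misses_opp P R a b \<or> takes_risk P R a b
      else misses_opp P R b a \<or> takes_risk P R b a)"

definition erred_along :: "'a rel \<Rightarrow> ('a \<times> 'a) list \<Rightarrow> bool" where
  "erred_along P h \<longleftrightarrow> (\<exists>i < length h. offer_error P (cur (take i h)) (fst (h ! i)) (snd (h ! i)))"

end

theory Submission
  imports Defs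
begin

(* Complete the current proto-ranking R by the chair's preference P: every pair left open by R
   is ranked as P ranks it.  This is the ranking the chair would end up with if every remaining
   vote went her way.  Along an error-free history the completion stays a ranking: a vote won by
   the preferred alternative leaves it unchanged, and a vote lost by it is error-free only if the
   two alternatives are adjacent in the completion, in which case the vote just swaps them.
   Conversely, offering an open pair that is adjacent in the completion is never an error, and as
   long as R is not total such a pair exists: among the open pairs, one with the fewest
   alternatives between them in the (finite) completion is adjacent, since any alternative
   between them would split off an open pair with fewer. *)

definition completion :: "'a rel \<Rightarrow> 'a rel \<Rightarrow> 'a rel" where
  "completion P R = R \<union> {(a, b). unranked R a b \<and> (a, b) \<in> P}"

definition between :: "'a rel \<Rightarrow> 'a \<Rightarrow> 'a \<Rightarrow> 'a set" where
  "between C a b = {c. (a, c) \<in> C \<and> (c, b) \<in> C}"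

lemma rankingD:
  assumes "ranking X C"
  shows "C \<subseteq> X \<times> X" "irrefl C" "trans C" "total_on X C" "asym C"
  using assms unfolding ranking_def proto_ranking_def
  by (simp_all add: asym_on_iff_irrefl_on_if_trans_on)

lemma exists_unranked_if_not_total:
  assumes "\<not> total_on X R" and "total_on X C"
  shows "\<exists>a b. unranked R a b \<and> (a, b) \<in> C"
proof -
  obtain a b where "a \<in> X" "b \<in> X" "unranked R a b"
    using assms(1) unfolding total_on_def unranked_def by blast
  moreover have "unranked R b a" using \<open>unranked R a b\<close> unfolding unranked_def by blast
  ultimately show ?thesis using assms(2) unfolding total_on_def unranked_def by blast
qed

lemma mem_completion_iff:
  "(a, b) \<in> completion P R \<longleftrightarrow> (if unranked R a b then (a, b) \<in> P else (a, b) \<in> R)"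
  unfolding completion_def unranked_def by auto

lemma subset_completion: "R \<subseteq> completion P R"
  unfolding completion_def by blast

lemma completion_minus_subset: "completion P R - R \<subseteq> P"
  unfolding completion_def by blast

lemma completion_if_preferred:
  "(a, b) \<in> P \<Longrightarrow> a \<noteq> b \<Longrightarrow> (b, a) \<notin> R \<Longrightarrow> (a, b) \<in> completion P R"
  unfolding completion_def unranked_def by blast

lemma completion_eq_ranking:
  assumes S: "ranking X S" and P: "ranking X P" and "R \<subseteq> S" and "S - R \<subseteq> P"
  shows "completion P R = S"
proof (intro set_eqI iffI; clarify)
  fix a b
  assume ab: "(a, b) \<in> completion P R"
  show "(a, b) \<in> S"
  proof (cases "(a, b) \<in> R")
    case False
    then have "unranked R a b" and abP: "(a, b) \<in> P"
      using ab by (simp_all add: mem_completion_iff split: if_splits)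
    moreover have "a \<in> X" "b \<in> X" using abP rankingD(1)[OF P] by auto
    ultimately have "(a, b) \<in> S \<or> (b, a) \<in> S"
      using rankingD(4)[OF S] unfolding total_on_def unranked_def by blast
    then show ?thesis
      using \<open>unranked R a b\<close> abP rankingD(5)[OF P] \<open>S - R \<subseteq> P\<close>
      unfolding unranked_def by (blast dest: asymD)
  qed (use \<open>R \<subseteq> S\<close> in blast)
next
  fix a b
  assume ab: "(a, b) \<in> S"
  show "(a, b) \<in> completion P R"
  proof (cases "(a, b) \<in> R")
    case False
    then show ?thesis
      using ab \<open>R \<subseteq> S\<close> \<open>S - R \<subseteq> P\<close> rankingD(5)[OF S]
      by (intro completion_if_preferred) (auto dest: asymD)
  qed (use subset_completion in blast)
qed

lemma no_error_iff_between_empty: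
  assumes "trans R" and "irrefl P" and C: "asym (completion P R)"
    and u: "unranked R x y" and xy: "(x, y) \<in> P"
  shows "\<not> misses_opp P R x y \<and> \<not> takes_risk P R x y \<longleftrightarrow> between (completion P R) x y = {}"
proof
  assume "\<not> misses_opp P R x y \<and> \<not> takes_risk P R x y"
  then have nm: "\<not> misses_opp P R x y" and nr: "\<not> takes_risk P R x y" by auto
  show "between (completion P R) x y = {}"
  proof (rule equals0I)
    fix z assume "z \<in> between (completion P R) x y"
    then have xz: "(x, z) \<in> completion P R" and zy: "(z, y) \<in> completion P R"
      unfolding between_def by auto
    have "(y, z) \<notin> R" using zy C subset_completion by (blast dest: asymD)
    have "z \<noteq> y" using zy C by (auto dest: asymD)
    show False
    proof (cases "(x, z) \<in> R")
      case True
      then have "(z, y) \<notin> R" using u \<open>trans R\<close> unfolding unranked_def by (blast dest: transD)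
      then have "(z, y) \<in> P" using zy \<open>(y, z) \<notin> R\<close> \<open>z \<noteq> y\<close> by (simp add: mem_completion_iff unranked_def)
      then show False using nr True \<open>(y, z) \<notin> R\<close> unfolding takes_risk_def by blast
    next
      case False
      then have "unranked R x z" "(x, z) \<in> P" using xz by (simp_all add: mem_completion_iff split: if_splits)
      moreover have "(z, y) \<in> R \<or> (z, y) \<in> P" using zy by (simp add: mem_completion_iff split: if_splits)
      ultimately show False using nm nr \<open>(y, z) \<notin> R\<close>
        unfolding misses_opp_def takes_risk_def unranked_def by blast
    qed
  qed
next
  assume empty: "between (completion P R) x y = {}"
  have pref: "(a, b) \<in> completion P R" if "(a, b) \<in> P" "(b, a) \<notin> R" for a b
    using that \<open>irrefl P\<close> by (intro completion_if_preferred) (auto simp: irrefl_def)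
  show "\<not> misses_opp P R x y \<and> \<not> takes_risk P R x y"
    using empty pref subset_completion[of R P]
    unfolding misses_opp_def takes_risk_def between_def by blast
qed

lemma ranking_swap_adjacent:
  assumes C: "ranking X C" and xy: "(x, y) \<in> C" and empty: "between C x y = {}"
  shows "ranking X (C - {(x, y)} \<union> {(y, x)})"
proof -
  note sub = rankingD(1)[OF C] and tot = rankingD(4)[OF C]
  have "trans C" "asym C" using rankingD[OF C] by auto
  have "x \<noteq> y" using xy \<open>asym C\<close> by (auto dest: asymD)
  have below_y: "(a, x) \<in> C" if "(a, y) \<in> C" "a \<noteq> x" for a
    using that sub tot empty xy unfolding total_on_def between_def by blast
  have above_x: "(y, b) \<in> C" if "(x, b) \<in> C" "b \<noteq> y" for b
    using that sub tot empty xy unfolding total_on_def between_def by blast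
  have "trans (C - {(x, y)} \<union> {(y, x)})"
  proof (rule transI, elim UnE DiffE)
    fix a b c
    assume "(a, b) \<in> C" "(a, b) \<notin> {(x, y)}" "(b, c) \<in> C" "(b, c) \<notin> {(x, y)}"
    then show "(a, c) \<in> C - {(x, y)} \<union> {(y, x)}"
      using \<open>trans C\<close> empty unfolding between_def by (blast dest: transD)
  next
    fix a b c
    assume "(a, b) \<in> C" "(a, b) \<notin> {(x, y)}" "(b, c) \<in> {(y, x)}"
    then show "(a, c) \<in> C - {(x, y)} \<union> {(y, x)}" using below_y by auto
  next
    fix a b c
    assume "(a, b) \<in> {(y, x)}" "(b, c) \<in> C" "(b, c) \<notin> {(x, y)}"
    then show "(a, c) \<in> C - {(x, y)} \<union> {(y, x)}" using above_x \<open>x \<noteq> y\<close> by auto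
  next
    fix a b c
    assume "(a, b) \<in> {(y, x)}" "(b, c) \<in> {(y, x)}"
    then show "(a, c) \<in> C - {(x, y)} \<union> {(y, x)}" using \<open>x \<noteq> y\<close> by auto
  qed
  moreover have "irrefl (C - {(x, y)} \<union> {(y, x)})"
    using \<open>asym C\<close> \<open>x \<noteq> y\<close> by (auto simp: irrefl_def dest: asymD)
  ultimately show ?thesis
    using sub tot xy unfolding ranking_def proto_ranking_def total_on_def by auto
qed

lemma completion_extend_preferred:
  assumes P: "ranking X P" and C: "ranking X (completion P R)"
    and u: "unranked R x y" and xy: "(x, y) \<in> P"
  shows "completion P ((R \<union> {(x, y)})\<^sup>+) = completion P R"
proof (rule completion_eq_ranking[OF C P])
  have "trans (completion P R)" using rankingD(3)[OF C] .
  moreover have "R \<union> {(x, y)} \<subseteq> completion P R"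
    using subset_completion u xy by (auto simp: mem_completion_iff)
  ultimately show "(R \<union> {(x, y)})\<^sup>+ \<subseteq> completion P R"
    by (metis trancl_id trancl_mono_subset)
  show "completion P R - (R \<union> {(x, y)})\<^sup>+ \<subseteq> P"
    using completion_minus_subset[of P R] by auto
qed

lemma completion_extend_dispreferred:
  assumes P: "ranking X P" and C: "ranking X (completion P R)"
    and u: "unranked R x y" and xy: "(x, y) \<in> P"
    and empty: "between (completion P R) x y = {}"
  shows "completion P ((R \<union> {(y, x)})\<^sup>+) = completion P R - {(x, y)} \<union> {(y, x)}"
proof (rule completion_eq_ranking[OF _ P])
  let ?S = "completion P R - {(x, y)} \<union> {(y, x)}"
  have xyC: "(x, y) \<in> completion P R" using u xy by (simp add: mem_completion_iff)
  show S: "ranking X ?S" using ranking_swap_adjacent[OF C xyC empty] .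
  have "trans ?S" using rankingD(3)[OF S] .
  moreover have "R \<union> {(y, x)} \<subseteq> ?S"
    using subset_completion u unfolding unranked_def by blast
  ultimately show "(R \<union> {(y, x)})\<^sup>+ \<subseteq> ?S"
    by (metis trancl_id trancl_mono_subset)
  show "?S - (R \<union> {(y, x)})\<^sup>+ \<subseteq> P"
    using completion_minus_subset[of P R] by auto
qed

lemma exists_unranked_between_empty:
  assumes "finite C" and "trans C" and "asym C" and "trans R" and "R \<subseteq> C"
    and "unranked R a b" and "(a, b) \<in> C"
  shows "\<exists>x y. unranked R x y \<and> (x, y) \<in> C \<and> between C x y = {}"
  using assms(6,7)
proof (induction "card (between C a b)" arbitrary: a b rule: less_induct)
  case less
  show ?case
  proof (cases "between C a b = {}")
    case False
    then obtain c where ac: "(a, c) \<in> C" and cb: "(c, b) \<in> C" unfolding between_def by blast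
    have fin: "finite (between C a b)"
      using finite_Range[OF \<open>finite C\<close>] by (rule finite_subset[rotated]) (auto simp: between_def)
    have c: "c \<in> between C a b" "c \<notin> between C a c" "c \<notin> between C c b"
      using ac cb \<open>asym C\<close> unfolding between_def by (auto dest: asymD)
    have "between C a c \<subseteq> between C a b" "between C c b \<subseteq> between C a b"
      using ac cb \<open>trans C\<close> unfolding between_def by (blast dest: transD)+
    then have smaller: "card (between C a c) < card (between C a b)"
                       "card (between C c b) < card (between C a b)"
      using c fin by (blast intro: psubset_card_mono)+
    have ranked: "(u, v) \<in> R" if "(u, v) \<in> C" "\<not> unranked R u v" for u v
      using that \<open>R \<subseteq> C\<close> \<open>asym C\<close> unfolding unranked_def by (blast dest: asymD)
    have "(a, b) \<notin> R" using less.prems unfolding unranked_def by blast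
    then have "unranked R a c \<or> unranked R c b"
      using ranked[OF ac] ranked[OF cb] \<open>trans R\<close> by (blast dest: transD)
    then show ?thesis using less.hyps smaller ac cb by blast
  qed (use less.prems in blast)
qed

lemma completion_empty: "irrefl P \<Longrightarrow> completion P {} = P"
  unfolding completion_def unranked_def irrefl_def by auto

lemma cur_snoc: "cur (h @ [(w, l)]) = (cur h \<union> {(w, l)})\<^sup>+"
  unfolding cur_def by simp

lemma trans_cur: "trans (cur h)"
proof (cases h rule: rev_cases)
  case (snoc h' p)
  then show ?thesis by (cases p) (simp add: cur_snoc trans_trancl)
qed (simp add: cur_def)

lemma erred_along_snoc:
  "erred_along P (h @ [(w, l)]) \<longleftrightarrow> erred_along P h \<or> offer_error P (cur h) w l"
  unfolding erred_along_def by (simp add: Ex_less_Suc nth_append disj_commute cong: conj_cong)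

lemma ranking_completion_cur:
  assumes "history X h" and P: "ranking X P" and "\<not> erred_along P h"
  shows "ranking X (completion P (cur h))"
  using assms(1,3)
proof (induction h rule: history.induct)
  case Nil
  then show ?case using P by (simp add: cur_def completion_empty ranking_def proto_ranking_def)
next
  case (step h w l)
  let ?R = "cur h"
  have C: "ranking X (completion P ?R)" and ok: "\<not> offer_error P ?R w l"
    using step.prems step.IH by (auto simp: erred_along_snoc)
  show ?case
  proof (cases "(w, l) \<in> P")
    case True
    then show ?thesis
      using completion_extend_preferred[OF P C step.hyps(5)] C by (simp add: cur_snoc)
  next
    case False
    then have lw: "(l, w) \<in> P"
      using rankingD(4)[OF P] step.hyps(3-5) unfolding total_on_def unranked_def by blast
    have u: "unranked ?R l w" using step.hyps(5) unfolding unranked_def by blast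
    have "\<not> misses_opp P ?R l w \<and> \<not> takes_risk P ?R l w"
      using ok False unfolding offer_error_def by simp
    then have empty: "between (completion P ?R) l w = {}"
      using no_error_iff_between_empty[OF trans_cur rankingD(2)[OF P] rankingD(5)[OF C] u lw] by blast
    have "(l, w) \<in> completion P ?R" using u lw by (simp add: mem_completion_iff)
    then show ?thesis
      unfolding cur_snoc completion_extend_dispreferred[OF P C u lw empty]
      by (rule ranking_swap_adjacent[OF C _ empty])
  qed
qed

theorem proposition2:
  fixes X :: "'a set" and P :: "'a rel" and h :: "('a \<times> 'a) list"
  assumes "finite X"
    and "ranking X P"
    and "history X h"
    and "\<not> total_on X (cur h)"
    and "\<not> erred_along P h"
  shows "\<exists>x y. x \<in> X \<and> y \<in> X \<and> unranked (cur h) x y \<and> \<not> offer_error P (cur h) x y"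
proof -
  let ?R = "cur h"
  let ?C = "completion P ?R"
  have C: "ranking X ?C" using ranking_completion_cur[OF assms(3,2,5)] .
  have "finite ?C"
    using rankingD(1)[OF C] \<open>finite X\<close> by (blast intro: finite_subset)
  obtain a b where "unranked ?R a b" "(a, b) \<in> ?C"
    using exists_unranked_if_not_total[OF assms(4) rankingD(4)[OF C]] by blast
  then obtain x y where u: "unranked ?R x y" and "(x, y) \<in> ?C" and "between ?C x y = {}"
    using exists_unranked_between_empty[OF \<open>finite ?C\<close> rankingD(3,5)[OF C] trans_cur subset_completion]
    by blast
  moreover have xy: "(x, y) \<in> P" using u \<open>(x, y) \<in> ?C\<close> by (simp add: mem_completion_iff)
  ultimately have "\<not> offer_error P ?R x y"
    using no_error_iff_between_empty[OF trans_cur rankingD(2)[OF assms(2)] rankingD(5)[OF C]]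
    unfolding offer_error_def by auto
  moreover have "x \<in> X" "y \<in> X" using xy rankingD(1)[OF assms(2)] by auto
  ultimately show ?thesis using u by blast
qed

end
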